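(* For any even positive integer $n\geq 4$, $\Delta_D(D_{2n})=\mathcal{P}_e(D_{2n})$.
   Context: $D_{2n}=\langle a,b\mid a^n=b^2=e,\ ab=ba^{-1}\rangle$ ($n\geq 3$). The enhanced power graph $\mathcal{P}_e(G)$ has vertex set $G$ with distinct $x,y$ adjacent iff $\langle x,y\rangle$ is cyclic. The deep commuting graph $\Delta_D(G)$ has vertex set $G$, distinct vertices adjacent iff their preimages commute in a Schur cover $\tilde G$ of $G$ (a central extension $\{e\}\to M(G)\to\tilde G\to G\to\{e\}$ with kernel contained in $Z(\tilde G)\cap[\tilde G,\tilde G]$, of maximal order; $M(G)$ the Schur multiplier). *)

theory Defs
  imports "HOL-Algebra.Algebra"
begin

text \<open>The dihedral group of order 2n, realised concretely: the pair (i, s) stands for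
  a^i b^s (0 \<le> i < n, s a boolean exponent of b).  Using b a^j = a^(-j) b we get
  (a^i b^s)(a^j b^t) = a^(i \<plusminus> j) b^(s+t).\<close>
definition dihedral_group :: "nat \<Rightarrow> (nat \<times> bool) monoid" where
  "dihedral_group n =
     \<lparr> carrier = {(i, s). i < n},
       monoid.mult = (\<lambda>(i, s) (j, t). ((if s then i + n - j else i + j) mod n, s \<noteq> t)),
       one = (0, False) \<rparr>"

definition group_center :: "('a, 'b) monoid_scheme \<Rightarrow> 'a set" where
  "group_center G = {z \<in> carrier G. \<forall>g \<in> carrier G. z \<otimes>\<^bsub>G\<^esub> g = g \<otimes>\<^bsub>G\<^esub> z}"

definition stem_extension ::
  "('c, 'd) monoid_scheme \<Rightarrow> ('a, 'b) monoid_scheme \<Rightarrow> ('c \<Rightarrow> 'a) \<Rightarrow> bool" where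
  "stem_extension H G q \<longleftrightarrow>
     group H \<and> q \<in> epi H G \<and>
     kernel H G q \<subseteq> group_center H \<inter> derived H (carrier H)"

text \<open>Every finite group is isomorphic to one whose carrier
  consists of natural numbers, so it suffices to compare with extensions carried by nat.\<close>
definition schur_cover ::
  "('c, 'd) monoid_scheme \<Rightarrow> ('a, 'b) monoid_scheme \<Rightarrow> ('c \<Rightarrow> 'a) \<Rightarrow> bool" where
  "schur_cover H G q \<longleftrightarrow>
     stem_extension H G q \<and> finite (carrier H) \<and>
     (\<forall>(H' :: nat monoid) (q' :: nat \<Rightarrow> 'a).
        stem_extension H' G q' \<and> finite (carrier H') \<longrightarrow>
        card (kernel H' G q') \<le> card (kernel H G q))"

definition enhanced_power_graph :: "('a, 'b) monoid_scheme \<Rightarrow> ('a \<times> 'a) set" where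
  "enhanced_power_graph G =
     {(x, y). x \<in> carrier G \<and> y \<in> carrier G \<and> x \<noteq> y \<and>
              cyclic_group (subgroup_generated G {x, y})}"

definition deep_commuting_graph ::
  "('c, 'd) monoid_scheme \<Rightarrow> ('a, 'b) monoid_scheme \<Rightarrow> ('c \<Rightarrow> 'a) \<Rightarrow> ('a \<times> 'a) set" where
  "deep_commuting_graph H G q =
     {(x, y). x \<in> carrier G \<and> y \<in> carrier G \<and> x \<noteq> y \<and>
              (\<exists>x' \<in> carrier H. \<exists>y' \<in> carrier H. q x' = x \<and> q y' = y \<and>
                  x' \<otimes>\<^bsub>H\<^esub> y' = y' \<otimes>\<^bsub>H\<^esub> x')}"

end

theory Submission
  imports Defs
begin

text \<open>A pair of distinct elements of D_2n generates a cyclic subgroup iff one of them is the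
  identity or both are rotations; the deep commuting graph turns out to have the same edges.
  Reduction mod n makes D_4n a stem extension of D_2n with kernel of order 2, so the kernel K of a
  Schur cover q : H -> D_2n is nontrivial.  Lifts of the identity commute with everything, and lifts
  of two rotations can be chosen as powers of a single lift a of the rotation a.

  Conversely, let n = 2m and suppose a lift b of a reflection commutes with a lift of the half turn
  a^m.  Since K is central, a commutator in H depends only on the images of its arguments.  Hence
  c = [a, b], which lies over a^2, commutes with a, satisfies c^m = [a^m, b] = 1, and every commutator
  of H is a power of c.  So K, being contained in [H, H], consists of powers c^k lying over
  a^(2k) = 1; then m divides k and K is trivial, a contradiction.  Two distinct nontrivial commuting
  elements of D_2n, one of them a reflection, are either that reflection and the half turn or two
  reflections whose product is the half turn, so in every remaining case the lifts do not commute.\<close>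

(* a^k b^s for an arbitrary integer exponent k *)
definition dihedral_elem :: "nat \<Rightarrow> int \<Rightarrow> bool \<Rightarrow> nat \<times> bool" where
  "dihedral_elem n k s = (nat (k mod int n), s)"

lemma dihedral_elem_in_carrier: "0 < n \<Longrightarrow> dihedral_elem n k s \<in> carrier (dihedral_group n)"
  by (simp add: dihedral_elem_def dihedral_group_def nat_less_iff)

lemma dihedral_elem_of_carrier:
  "x \<in> carrier (dihedral_group n) \<Longrightarrow> x = dihedral_elem n (int (fst x)) (snd x)"
  by (auto simp: dihedral_elem_def dihedral_group_def zmod_int)

lemma dihedral_elem_eq_iff:
  "0 < n \<Longrightarrow> dihedral_elem n k s = dihedral_elem n l t \<longleftrightarrow> k mod int n = l mod int n \<and> s = t"
  by (simp add: dihedral_elem_def eq_nat_nat_iff)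

lemma snd_dihedral_elem [simp]: "snd (dihedral_elem n k s) = s"
  by (simp add: dihedral_elem_def)

lemma one_dihedral_group: "\<one>\<^bsub>dihedral_group n\<^esub> = dihedral_elem n 0 False"
  by (simp add: dihedral_elem_def dihedral_group_def)

lemma dihedral_elem_mult:
  assumes "0 < n"
  shows "dihedral_elem n k s \<otimes>\<^bsub>dihedral_group n\<^esub> dihedral_elem n l t =
           dihedral_elem n (if s then k - l else k + l) (s \<noteq> t)"
proof -
  have "int ((if s then nat (k mod n) + n - nat (l mod n) else nat (k mod n) + nat (l mod n)) mod n)
          = (if s then k - l else k + l) mod n"
  proof -
    have "(int n + k mod n - l mod n) mod n = (k - l) mod n"
      by (metis add_diff_eq mod_add_self1 mod_diff_eq)
    moreover have "nat (l mod n) \<le> n"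
      using assms pos_mod_bound[of "int n" l] by linarith
    ultimately show ?thesis
      using assms by (simp add: zmod_int of_nat_diff mod_add_eq add.commute add.left_commute)
  qed
  from arg_cong[OF this, of nat] show ?thesis
    by (simp add: dihedral_elem_def dihedral_group_def)
qed

lemma dihedral_group_cases:
  assumes "x \<in> carrier (dihedral_group n)"
  obtains k s where "x = dihedral_elem n k s"
  using dihedral_elem_of_carrier[OF assms] by blast

lemma dihedral_rotation_cases:
  assumes "x \<in> carrier (dihedral_group n)" "\<not> snd x"
  obtains k where "x = dihedral_elem n k False"
proof -
  obtain k s where "x = dihedral_elem n k s"
    using assms(1) by (rule dihedral_group_cases)
  with assms(2) that show thesis
    by simp
qed

lemma dihedral_reflection_cases:
  assumes "x \<in> carrier (dihedral_group n)" "snd x"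
  obtains k where "x = dihedral_elem n k True"
proof -
  obtain k s where "x = dihedral_elem n k s"
    using assms(1) by (rule dihedral_group_cases)
  with assms(2) that show thesis
    by simp
qed

lemma group_dihedral_group:
  assumes "0 < n"
  shows "group (dihedral_group n)"
proof (rule groupI)
  show "\<one>\<^bsub>dihedral_group n\<^esub> \<in> carrier (dihedral_group n)"
    by (simp add: one_dihedral_group dihedral_elem_in_carrier assms)
next
  fix x y
  assume "x \<in> carrier (dihedral_group n)" "y \<in> carrier (dihedral_group n)"
  then show "x \<otimes>\<^bsub>dihedral_group n\<^esub> y \<in> carrier (dihedral_group n)"
    by (metis dihedral_group_cases dihedral_elem_mult dihedral_elem_in_carrier assms)
next
  fix x y z
  assume "x \<in> carrier (dihedral_group n)" "y \<in> carrier (dihedral_group n)"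
    "z \<in> carrier (dihedral_group n)"
  then obtain i j k s t u
    where "x = dihedral_elem n i s" "y = dihedral_elem n j t" "z = dihedral_elem n k u"
    by (metis dihedral_group_cases)
  then show "x \<otimes>\<^bsub>dihedral_group n\<^esub> y \<otimes>\<^bsub>dihedral_group n\<^esub> z =
               x \<otimes>\<^bsub>dihedral_group n\<^esub> (y \<otimes>\<^bsub>dihedral_group n\<^esub> z)"
    using assms by (simp add: dihedral_elem_mult algebra_simps)
next
  fix x
  assume "x \<in> carrier (dihedral_group n)"
  then obtain k s where x: "x = dihedral_elem n k s"
    by (metis dihedral_group_cases)
  then show "\<one>\<^bsub>dihedral_group n\<^esub> \<otimes>\<^bsub>dihedral_group n\<^esub> x = x"
    using assms by (simp add: one_dihedral_group dihedral_elem_mult)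
  show "\<exists>x'\<in>carrier (dihedral_group n). x' \<otimes>\<^bsub>dihedral_group n\<^esub> x = \<one>\<^bsub>dihedral_group n\<^esub>"
    using assms x
    by (intro bexI[of _ "dihedral_elem n (if s then k else - k) s"])
      (auto simp: one_dihedral_group dihedral_elem_mult dihedral_elem_eq_iff dihedral_elem_in_carrier)
qed

lemma inv_dihedral_elem:
  "0 < n \<Longrightarrow> inv\<^bsub>dihedral_group n\<^esub> (dihedral_elem n k s) = dihedral_elem n (if s then k else - k) s"
  by (intro group.inv_equality[OF group_dihedral_group])
    (auto simp: one_dihedral_group dihedral_elem_mult dihedral_elem_eq_iff dihedral_elem_in_carrier)

lemma dihedral_rotation_int_pow:
  assumes "0 < n"
  shows "dihedral_elem n k False [^]\<^bsub>dihedral_group n\<^esub> (j::int) = dihedral_elem n (k * j) False"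
proof -
  interpret D: group "dihedral_group n" using group_dihedral_group[OF assms] .
  have nat_pow: "dihedral_elem n k False [^]\<^bsub>dihedral_group n\<^esub> (i::nat) = dihedral_elem n (k * i) False"
    for i
    by (induction i) (simp_all add: one_dihedral_group dihedral_elem_mult assms algebra_simps)
  show ?thesis
  proof (cases "j < 0")
    case True
    then show ?thesis
      using D.int_pow_neg_int[of _ "nat (- j)"] nat_pow[of "nat (- j)"]
      by (simp add: dihedral_elem_in_carrier inv_dihedral_elem assms)
  next
    case False
    then show ?thesis
      using int_pow_int[of _ "nat j"] nat_pow[of "nat j"] by simp
  qed
qed

lemma dihedral_reflection_rotation_commute_iff:
  assumes "0 < n"
  shows "dihedral_elem n k True \<otimes>\<^bsub>dihedral_group n\<^esub> dihedral_elem n l False =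
           dihedral_elem n l False \<otimes>\<^bsub>dihedral_group n\<^esub> dihedral_elem n k True \<longleftrightarrow>
         int n dvd 2 * l"
proof -
  have "(k - l) - (l + k) = - (2 * l)"
    by simp
  then show ?thesis
    using assms by (simp add: dihedral_elem_mult dihedral_elem_eq_iff mod_eq_dvd_iff)
qed

lemma dihedral_reflections_commute_iff:
  assumes "0 < n"
  shows "dihedral_elem n k True \<otimes>\<^bsub>dihedral_group n\<^esub> dihedral_elem n l True =
           dihedral_elem n l True \<otimes>\<^bsub>dihedral_group n\<^esub> dihedral_elem n k True \<longleftrightarrow>
         int n dvd 2 * (k - l)"
proof -
  have "(k - l) - (l - k) = 2 * (k - l)"
    by simp
  then show ?thesis
    using assms by (simp add: dihedral_elem_mult dihedral_elem_eq_iff mod_eq_dvd_iff)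
qed

lemma dihedral_half_turn_of_dvd:
  assumes "even n" "int n dvd 2 * l" "\<not> int n dvd l"
  shows "dihedral_elem n l False = dihedral_elem n (int n div 2) False"
proof -
  obtain m where m: "n = 2 * m"
    using assms(1) by blast
  then obtain c where c: "l = int m * c"
    using assms(2) by (auto elim!: dvdE)
  then have "odd c"
    using assms(3) m by auto
  then have "l mod int n = int m"
    using m c by (auto elim!: oddE simp: algebra_simps)
  moreover have "0 < n"
    using assms(2,3) by (auto intro: Nat.gr0I)
  ultimately show ?thesis
    using m by (simp add: dihedral_elem_eq_iff)
qed

section \<open>A stem extension of the dihedral group with kernel of order two\<close>

lemma finite_carrier_dihedral_group: "finite (carrier (dihedral_group n))"
proof (rule finite_subset)
  show "carrier (dihedral_group n) \<subseteq> {..<n} \<times> UNIV"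
    by (auto simp: dihedral_group_def)
qed simp

definition dihedral_reduce :: "nat \<Rightarrow> nat \<times> bool \<Rightarrow> nat \<times> bool" where
  "dihedral_reduce n = (\<lambda>(i, s). (i mod n, s))"

lemma dihedral_reduce_elem:
  assumes "0 < n"
  shows "dihedral_reduce n (dihedral_elem (2 * n) k s) = dihedral_elem n k s"
proof -
  have "nat (k mod int (2 * n)) mod n = nat (k mod int (2 * n) mod int n)"
    using assms by (simp add: nat_mod_distrib)
  also have "\<dots> = nat (k mod int n)"
    by (simp add: mod_mod_cancel)
  finally show ?thesis
    by (simp add: dihedral_reduce_def dihedral_elem_def)
qed

lemma dihedral_reduce_hom:
  assumes "0 < n"
  shows "dihedral_reduce n \<in> hom (dihedral_group (2 * n)) (dihedral_group n)"
proof (rule homI)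
  fix x assume "x \<in> carrier (dihedral_group (2 * n))"
  then show "dihedral_reduce n x \<in> carrier (dihedral_group n)"
    using assms by (auto simp: dihedral_reduce_def dihedral_group_def)
next
  fix x y
  assume "x \<in> carrier (dihedral_group (2 * n))" "y \<in> carrier (dihedral_group (2 * n))"
  then obtain k s l t where "x = dihedral_elem (2 * n) k s" "y = dihedral_elem (2 * n) l t"
    by (metis dihedral_group_cases)
  then show "dihedral_reduce n (x \<otimes>\<^bsub>dihedral_group (2 * n)\<^esub> y) =
      dihedral_reduce n x \<otimes>\<^bsub>dihedral_group n\<^esub> dihedral_reduce n y"
    using assms by (simp add: dihedral_elem_mult dihedral_reduce_elem)
qed

lemma dihedral_reduce_kernel:
  assumes "0 < n"
  shows "kernel (dihedral_group (2 * n)) (dihedral_group n) (dihedral_reduce n) = {(0, False), (n, False)}"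
proof -
  have "i mod n = 0 \<longleftrightarrow> i = 0 \<or> i = n" if "i < 2 * n" for i
    using that by (auto elim!: dvdE simp: mod_eq_0_iff_dvd)
  then show ?thesis
    using assms by (auto simp: kernel_def dihedral_group_def dihedral_reduce_def)
qed

lemma stem_extension_dihedral_reduce:
  assumes "even n" "0 < n"
  shows "stem_extension (dihedral_group (2 * n)) (dihedral_group n) (dihedral_reduce n)"
proof -
  interpret D: group "dihedral_group (2 * n)"
    using group_dihedral_group assms by simp
  have epi: "dihedral_reduce n \<in> epi (dihedral_group (2 * n)) (dihedral_group n)"
  proof -
    have "x \<in> dihedral_reduce n ` carrier (dihedral_group (2 * n))"
      if x: "x \<in> carrier (dihedral_group n)" for x
    proof (rule rev_image_eqI)
      show "x \<in> carrier (dihedral_group (2 * n))" "x = dihedral_reduce n x"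
        using x by (auto simp: dihedral_group_def dihedral_reduce_def)
    qed
    then show ?thesis
      unfolding epi_iff_subset using dihedral_reduce_hom[OF assms(2)] by blast
  qed
  have half_turn: "(n, False) = dihedral_elem (2 * n) n False"
    by (simp add: dihedral_elem_def)
  have "(n, False) \<in> group_center (dihedral_group (2 * n))"
    unfolding group_center_def
  proof (intro CollectI conjI ballI)
    show "(n, False) \<in> carrier (dihedral_group (2 * n))"
      using assms by (simp add: dihedral_group_def)
  next
    fix g assume "g \<in> carrier (dihedral_group (2 * n))"
    then obtain k s where g: "g = dihedral_elem (2 * n) k s"
      by (metis dihedral_group_cases)
    have "k + int n = (k - int n) + int (2 * n)"
      by simp
    then have "(k - int n) mod int (2 * n) = (k + int n) mod int (2 * n)"
      by (metis mod_add_self2)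
    then show "(n, False) \<otimes>\<^bsub>dihedral_group (2 * n)\<^esub> g = g \<otimes>\<^bsub>dihedral_group (2 * n)\<^esub> (n, False)"
      using assms by (simp add: half_turn g dihedral_elem_mult dihedral_elem_eq_iff add.commute)
  qed
  moreover have "(n, False) \<in> derived (dihedral_group (2 * n)) (carrier (dihedral_group (2 * n)))"
  proof -
    obtain m where m: "n = 2 * m"
      using assms(1) by blast
    let ?a = "dihedral_elem (2 * n) (int m) False" and ?b = "dihedral_elem (2 * n) 0 True"
    have a: "?a \<in> carrier (dihedral_group (2 * n))" and b: "?b \<in> carrier (dihedral_group (2 * n))"
      using assms by (simp_all add: dihedral_elem_in_carrier)
    have "?a \<otimes>\<^bsub>dihedral_group (2 * n)\<^esub> ?b \<otimes>\<^bsub>dihedral_group (2 * n)\<^esub>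
            inv\<^bsub>dihedral_group (2 * n)\<^esub> ?a \<otimes>\<^bsub>dihedral_group (2 * n)\<^esub> inv\<^bsub>dihedral_group (2 * n)\<^esub> ?b
          = (n, False)"
      using assms by (simp add: inv_dihedral_elem dihedral_elem_mult) (simp add: dihedral_elem_def m)
    then have "(n, False) \<in> derived_set (dihedral_group (2 * n)) (carrier (dihedral_group (2 * n)))"
      by (intro UN_I[OF a] UN_I[OF b]) simp
    then show ?thesis
      unfolding derived_def by (rule generate.incl)
  qed
  moreover have "(0, False) = \<one>\<^bsub>dihedral_group (2 * n)\<^esub>"
    by (simp add: dihedral_group_def)
  ultimately show ?thesis
    unfolding stem_extension_def dihedral_reduce_kernel[OF assms(2)]
    using D.is_group epi by (auto simp: group_center_def derived_def intro: generate.one)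
qed

lemma (in group) stem_extension_image_group:
  assumes stem: "stem_extension G K q" and inj: "inj_on f (carrier G)"
  shows "stem_extension (image_group f G) K (q \<circ> inv_into (carrier G) f)"
    and "kernel (image_group f G) K (q \<circ> inv_into (carrier G) f) = f ` kernel G K q"
proof -
  let ?G' = "image_group f G" and ?g = "inv_into (carrier G) f"
  have iso: "f \<in> iso G ?G'"
    using inj by (rule inj_imp_image_group_iso)
  interpret f: group_hom G ?G' f
    using iso inj_imp_image_group_is_group[OF inj]
    by (simp add: group_hom_def group_hom_axioms_def is_group iso_def)
  have carrier': "carrier ?G' = f ` carrier G"
    by (rule image_group_carrier)
  have g_f [simp]: "?g (f x) = x" if "x \<in> carrier G" for x
    using inj that by (rule inv_into_f_f)
  have q_hom: "q \<in> hom G K" and q_surj: "q ` carrier G = carrier K"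
    using stem by (simp_all add: stem_extension_def epi_def)
  show kernel': "kernel ?G' K (q \<circ> ?g) = f ` kernel G K q"
    by (auto simp: kernel_def carrier')
  have "q \<circ> ?g \<in> epi ?G' K"
  proof -
    have "?g \<in> hom ?G' G"
      using iso_set_sym[OF iso] by (simp add: iso_def)
    moreover have "(q \<circ> ?g) ` carrier ?G' = carrier K"
      using q_surj by (simp add: carrier' image_comp)
    ultimately show ?thesis
      using Group.hom_compose[OF _ q_hom] by (simp add: epi_def)
  qed
  moreover have "f z \<in> group_center ?G'" if "z \<in> group_center G" for z
    using that unfolding group_center_def carrier' by (auto simp flip: f.hom_mult)
  moreover have "f ` derived G (carrier G) = derived ?G' (carrier ?G')"
    by (simp add: carrier' f.derived_img)
  ultimately show "stem_extension ?G' K (q \<circ> ?g)"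
    using stem f.H.is_group unfolding stem_extension_def kernel' by blast
qed

lemma schur_cover_kernel_card_max:
  assumes cover: "schur_cover H G q"
    and stem: "stem_extension H' G q'" and fin: "finite (carrier H')"
  shows "card (kernel H' G q') \<le> card (kernel H G q)"
proof -
  obtain f :: "_ \<Rightarrow> nat" where inj: "inj_on f (carrier H')"
    using fin finite_imp_inj_to_nat_seg by blast
  interpret H': group H'
    using stem by (simp add: stem_extension_def)
  have "card (kernel H' G q') = card (kernel (image_group f H') G (q' \<circ> inv_into (carrier H') f))"
    using H'.stem_extension_image_group(2)[OF stem inj] inj
    by (simp add: card_image kernel_def inj_on_subset)
  also have "\<dots> \<le> card (kernel H G q)"
    using cover H'.stem_extension_image_group(1)[OF stem inj] fin
    by (simp add: schur_cover_def image_group_carrier)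
  finally show ?thesis .
qed

definition commutator :: "('a, 'b) monoid_scheme \<Rightarrow> 'a \<Rightarrow> 'a \<Rightarrow> 'a" where
  "commutator G x y = x \<otimes>\<^bsub>G\<^esub> y \<otimes>\<^bsub>G\<^esub> inv\<^bsub>G\<^esub> x \<otimes>\<^bsub>G\<^esub> inv\<^bsub>G\<^esub> y"

context group
begin

lemma inv_mult_cancel_left [simp]: "x \<in> carrier G \<Longrightarrow> y \<in> carrier G \<Longrightarrow> inv x \<otimes> (x \<otimes> y) = y"
  by (simp add: m_assoc [symmetric])

lemma mult_inv_cancel_left [simp]: "x \<in> carrier G \<Longrightarrow> y \<in> carrier G \<Longrightarrow> x \<otimes> (inv x \<otimes> y) = y"
  by (simp add: m_assoc [symmetric])

lemma mult_inv_cancel_right [simp]: "x \<in> carrier G \<Longrightarrow> y \<in> carrier G \<Longrightarrow> x \<otimes> y \<otimes> inv y = x"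
  by (simp add: m_assoc)

lemma commutator_closed [simp]:
  "x \<in> carrier G \<Longrightarrow> y \<in> carrier G \<Longrightarrow> commutator G x y \<in> carrier G"
  by (simp add: commutator_def)

lemma inv_commutator:
  "x \<in> carrier G \<Longrightarrow> y \<in> carrier G \<Longrightarrow> inv (commutator G x y) = commutator G y x"
  by (simp add: commutator_def inv_mult_group m_assoc)

lemma commutator_eq_one_iff:
  "x \<in> carrier G \<Longrightarrow> y \<in> carrier G \<Longrightarrow> commutator G x y = \<one> \<longleftrightarrow> x \<otimes> y = y \<otimes> x"
proof -
  assume "x \<in> carrier G" "y \<in> carrier G"
  moreover have "commutator G x y = x \<otimes> y \<otimes> inv (y \<otimes> x)"
    using calculation by (simp add: commutator_def inv_mult_group m_assoc)
  ultimately show ?thesis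
    by (simp add: inv_solve_right')
qed

lemma commutator_mult_left:
  "x \<in> carrier G \<Longrightarrow> y \<in> carrier G \<Longrightarrow> z \<in> carrier G \<Longrightarrow>
    commutator G (x \<otimes> y) z = x \<otimes> commutator G y z \<otimes> inv x \<otimes> commutator G x z"
  by (simp add: commutator_def inv_mult_group m_assoc)

lemma commutator_mult_right:
  "x \<in> carrier G \<Longrightarrow> y \<in> carrier G \<Longrightarrow> z \<in> carrier G \<Longrightarrow>
    commutator G x (y \<otimes> z) = commutator G x y \<otimes> y \<otimes> commutator G x z \<otimes> inv y"
  by (simp add: commutator_def inv_mult_group m_assoc)

lemma conj_eq_of_commute:
  "x \<in> carrier G \<Longrightarrow> y \<in> carrier G \<Longrightarrow> x \<otimes> y = y \<otimes> x \<Longrightarrow> x \<otimes> y \<otimes> inv x = y"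
  by (simp add: m_assoc)

lemma conj_inv_eq_of_commute:
  assumes "x \<in> carrier G" "y \<in> carrier G" "x \<otimes> y = y \<otimes> x"
  shows "x \<otimes> inv y \<otimes> inv x = inv y"
proof -
  have "x \<otimes> inv y \<otimes> inv x = inv (x \<otimes> y \<otimes> inv x)"
    using assms(1,2) by (simp add: inv_mult_group m_assoc)
  then show ?thesis
    using assms by (simp add: conj_eq_of_commute)
qed

lemma commutator_central_left:
  assumes "k \<in> group_center G" "x \<in> carrier G" "y \<in> carrier G"
  shows "commutator G (k \<otimes> x) y = commutator G x y"
proof -
  have "commutator G k y = \<one>" "k \<otimes> commutator G x y \<otimes> inv k = commutator G x y"
    using assms conj_eq_of_commute[of k "commutator G x y"]
    by (simp_all add: group_center_def commutator_eq_one_iff)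
  then show ?thesis
    using assms by (simp add: group_center_def commutator_mult_left)
qed

end

lemma (in group_hom) commutator_eq_of_central_kernel:
  assumes central: "kernel G H h \<subseteq> group_center G"
    and carrier: "x \<in> carrier G" "y \<in> carrier G" "x' \<in> carrier G" "y' \<in> carrier G"
    and images: "h x = h x'" "h y = h y'"
  shows "commutator G x y = commutator G x' y'"
proof -
  have central_quotient: "z = (z \<otimes> inv z') \<otimes> z'" "z \<otimes> inv z' \<in> group_center G"
    if "z \<in> carrier G" "z' \<in> carrier G" "h z = h z'" for z z'
    using that central by (auto simp: kernel_def G.m_assoc)
  have "commutator G x y = commutator G x' y"
    using central_quotient[of x x'] G.commutator_central_left[of _ x' y] carrier images by metis
  also have "\<dots> = inv (commutator G y' x')"
    using central_quotient[of y y'] G.commutator_central_left[of _ y' x'] carrier images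
    by (metis G.inv_commutator)
  also have "\<dots> = commutator G x' y'"
    using carrier by (simp add: G.inv_commutator)
  finally show ?thesis .
qed

section \<open>Central extensions of the dihedral group\<close>

locale dihedral_central_extension = group G for G (structure) +
  fixes n :: nat and q :: "'a \<Rightarrow> nat \<times> bool" and a b :: 'a
  assumes n_pos: "0 < n"
    and q_hom: "q \<in> hom G (dihedral_group n)"
    and kernel_central: "kernel G (dihedral_group n) q \<subseteq> group_center G"
    and a_closed [simp]: "a \<in> carrier G" and q_a: "q a = dihedral_elem n 1 False"
    and b_closed [simp]: "b \<in> carrier G" and q_b: "snd (q b)"
begin

sublocale q: group_hom G "dihedral_group n" q
  by (simp add: group_hom_def group_hom_axioms_def is_group group_dihedral_group n_pos q_hom)

lemma commutator_eq_of_images: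
  "\<lbrakk>x \<in> carrier G; y \<in> carrier G; x' \<in> carrier G; y' \<in> carrier G; q x = q x'; q y = q y'\<rbrakk>
    \<Longrightarrow> commutator G x y = commutator G x' y'"
  by (rule q.commutator_eq_of_central_kernel[OF kernel_central])

lemma q_b_cases:
  obtains i where "q b = dihedral_elem n i True"
  using q.hom_closed[OF b_closed] q_b by (rule dihedral_reflection_cases)

lemma q_int_pow_a: "q (a [^] (k::int)) = dihedral_elem n k False"
  using n_pos by (simp add: q.hom_int_pow q_a dihedral_rotation_int_pow)

lemma q_pow_a: "q (a [^] (j::nat)) = dihedral_elem n (int j) False"
  using q_int_pow_a[of "int j"] by (simp add: int_pow_int)

lemma q_commutator_a_b: "q (commutator G a b) = dihedral_elem n 2 False"
proof -
  obtain i where "q b = dihedral_elem n i True"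
    by (rule q_b_cases)
  then show ?thesis
    using n_pos by (simp add: commutator_def q_a dihedral_elem_mult inv_dihedral_elem dihedral_elem_eq_iff)
qed

lemma commutator_a_b_commutes_a: "a \<otimes> commutator G a b = commutator G a b \<otimes> a"
proof -
  \<comment> \<open>both [a, b] and a * a lie over the rotation by 2\<close>
  have "q (commutator G a b) = q (a \<otimes> a)"
    using n_pos by (simp add: q_commutator_a_b q_a dihedral_elem_mult)
  then have "commutator G a (commutator G a b) = commutator G a (a \<otimes> a)"
    by (intro commutator_eq_of_images) simp_all
  also have "\<dots> = \<one>"
    by (simp add: commutator_eq_one_iff m_assoc)
  finally show ?thesis
    by (simp add: commutator_eq_one_iff)
qed

lemma a_commutes_commutator_pow:
  "a \<otimes> commutator G a b [^] (j::nat) = commutator G a b [^] j \<otimes> a"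
  using group_commutes_pow[OF commutator_a_b_commutes_a [symmetric]] by simp

lemma pow_a_commutes_commutator_pow:
  "a [^] (l::nat) \<otimes> commutator G a b [^] (j::nat) = commutator G a b [^] j \<otimes> a [^] l"
  using group_commutes_pow[OF a_commutes_commutator_pow] by simp

lemma commutator_pow_a_b: "commutator G (a [^] (j::nat)) b = commutator G a b [^] j"
proof (induction j)
  case 0
  then show ?case
    by (simp add: commutator_eq_one_iff)
next
  case (Suc j)
  have "commutator G (a \<otimes> a [^] j) b = commutator G a b [^] j \<otimes> commutator G a b"
    by (simp add: commutator_mult_left Suc a_commutes_commutator_pow)
  then show ?case
    by (simp add: nat_pow_Suc2 [symmetric] nat_pow_Suc)
qed

lemma commutator_rotation_lifts: "commutator G (a [^] (j::nat)) (a [^] (l::nat)) = \<one>"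
  by (simp add: commutator_eq_one_iff nat_pow_mult add.commute)

lemma commutator_rotation_reflection_lifts:
  "commutator G (a [^] (j::nat)) (a [^] (l::nat) \<otimes> b) = commutator G a b [^] j"
  by (simp add: commutator_mult_right commutator_rotation_lifts commutator_pow_a_b
      conj_eq_of_commute pow_a_commutes_commutator_pow)

lemma commutator_reflection_lifts:
  "commutator G (a [^] (j::nat) \<otimes> b) (a [^] (l::nat) \<otimes> b) =
     inv (commutator G a b [^] l) \<otimes> commutator G a b [^] j"
proof -
  have "commutator G (a [^] l \<otimes> b) b = commutator G a b [^] l"
    by (simp add: commutator_mult_left commutator_pow_a_b commutator_eq_one_iff[THEN iffD2])
  then have "commutator G b (a [^] l \<otimes> b) = inv (commutator G a b [^] l)"
    by (metis inv_commutator a_closed b_closed m_closed nat_pow_closed)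
  then show ?thesis
    by (simp add: commutator_mult_left commutator_rotation_reflection_lifts
        conj_inv_eq_of_commute pow_a_commutes_commutator_pow)
qed

lemma lift_cases:
  assumes "x \<in> carrier G"
  obtains (rotation) j where "q x = q (a [^] (j::nat))"
    | (reflection) j where "q x = q (a [^] (j::nat) \<otimes> b)"
proof -
  obtain k s where x: "q x = dihedral_elem n k s"
    using assms by (metis dihedral_group_cases q.hom_closed)
  show thesis
  proof (cases s)
    case False
    have "q x = q (a [^] nat (k mod int n))"
      using n_pos by (simp add: x False q_int_pow_a dihedral_elem_eq_iff)
    then show ?thesis
      by (rule rotation)
  next
    case True
    obtain i where i: "q b = dihedral_elem n i True"
      by (rule q_b_cases)
    have "(int (nat ((k - i) mod int n)) + i) mod int n = k mod int n"
      using n_pos by (simp add: mod_add_left_eq)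
    then have "q x = q (a [^] nat ((k - i) mod int n) \<otimes> b)"
      using n_pos by (simp add: x True q_int_pow_a i dihedral_elem_mult dihedral_elem_eq_iff)
    then show ?thesis
      by (rule reflection)
  qed
qed

lemma commutator_in_generate:
  assumes "x \<in> carrier G" "y \<in> carrier G"
  shows "commutator G x y \<in> generate G {commutator G a b}"
proof -
  let ?S = "generate G {commutator G a b}"
  interpret S: subgroup ?S G
    by (simp add: generate_is_subgroup)
  have pow_in_S: "commutator G a b [^] (j::nat) \<in> ?S" for j
    using S.subgroup_axioms by (metis generate.incl singletonI int_pow_int subgroup_int_pow_closed)
  have commutator_eq: "commutator G x y = commutator G x' y'"
    if "q x = q x'" "q y = q y'" "x' \<in> carrier G" "y' \<in> carrier G" for x' y'
    using that assms by (intro commutator_eq_of_images) simp_all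
  show ?thesis
  proof (cases rule: lift_cases[OF assms(1)]; cases rule: lift_cases[OF assms(2)])
    fix j l :: nat
    assume "q x = q (a [^] j)" "q y = q (a [^] l)"
    then show ?thesis
      using commutator_eq[of "a [^] j" "a [^] l"] by (simp add: commutator_rotation_lifts)
  next
    fix j l :: nat
    assume "q x = q (a [^] j)" "q y = q (a [^] l \<otimes> b)"
    then show ?thesis
      using commutator_eq[of "a [^] j" "a [^] l \<otimes> b"]
      by (simp add: commutator_rotation_reflection_lifts pow_in_S)
  next
    fix j l :: nat
    assume "q x = q (a [^] j \<otimes> b)" "q y = q (a [^] l)"
    then have "commutator G x y = inv (commutator G (a [^] l) (a [^] j \<otimes> b))"
      using commutator_eq[of "a [^] j \<otimes> b" "a [^] l"] by (simp add: inv_commutator)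
    then show ?thesis
      by (simp add: commutator_rotation_reflection_lifts pow_in_S)
  next
    fix j l :: nat
    assume "q x = q (a [^] j \<otimes> b)" "q y = q (a [^] l \<otimes> b)"
    then show ?thesis
      using commutator_eq[of "a [^] j \<otimes> b" "a [^] l \<otimes> b"]
      by (simp add: commutator_reflection_lifts pow_in_S)
  qed
qed

lemma derived_subset_generate_commutator:
  "derived G (carrier G) \<subseteq> generate G {commutator G a b}"
proof -
  have "derived_set G (carrier G) = (\<Union>x\<in>carrier G. \<Union>y\<in>carrier G. {commutator G x y})"
    by (simp add: commutator_def)
  then show ?thesis
    unfolding derived_def
    by (intro generate_subgroup_incl generate_is_subgroup) (auto simp: commutator_in_generate)
qed

lemma kernel_inter_derived_trivial_if_half_turn_commutes:
  assumes "even n"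
    and u: "u \<in> carrier G" "q u = dihedral_elem n (int n div 2) False"
    and commute: "b \<otimes> u = u \<otimes> b"
  shows "kernel G (dihedral_group n) q \<inter> derived G (carrier G) \<subseteq> {\<one>}"
proof
  fix x
  assume x: "x \<in> kernel G (dihedral_group n) q \<inter> derived G (carrier G)"
  obtain m where m: "n = 2 * m"
    using assms(1) by blast
  have "commutator G a b [^] m = commutator G (a [^] m) b"
    by (simp add: commutator_pow_a_b)
  also have "\<dots> = commutator G u b"
    using u m by (intro commutator_eq_of_images) (simp_all add: q_pow_a)
  also have "\<dots> = \<one>"
    using u commute by (simp add: commutator_eq_one_iff)
  finally have ord_dvd: "int (ord (commutator G a b)) dvd int m"
    by (simp add: pow_eq_id)
  obtain k :: int where k: "x = commutator G a b [^] k"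
    using x derived_subset_generate_commutator by (auto simp: generate_pow)
  have "dihedral_elem n (2 * k) False = dihedral_elem n 0 False"
    using x n_pos
    by (simp add: k kernel_def q.hom_int_pow q_commutator_a_b dihedral_rotation_int_pow one_dihedral_group)
  then have "int m dvd k"
    using n_pos by (simp add: dihedral_elem_eq_iff m mod_eq_0_iff_dvd)
  then show "x \<in> {\<one>}"
    using dvd_trans[OF ord_dvd] by (simp add: k int_pow_eq_id)
qed

end

section \<open>Cyclic subgroups of the dihedral group\<close>

lemma (in group) cyclic_subgroup_generated_iff:
  assumes "S \<subseteq> carrier G"
  shows "cyclic_group (subgroup_generated G S) \<longleftrightarrow> (\<exists>z\<in>carrier G. generate G S = generate G {z})"
proof
  assume "cyclic_group (subgroup_generated G S)"
  then obtain z where z: "z \<in> generate G S"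
    and gen: "subgroup_generated (subgroup_generated G S) {z} = subgroup_generated G S"
    using assms by (auto simp: cyclic_group_def carrier_subgroup_generated Int_absorb1)
  have "generate G S = carrier (subgroup_generated (subgroup_generated G S) {z})"
    using assms gen by (simp add: carrier_subgroup_generated Int_absorb1)
  also have "\<dots> = generate G {z}"
    using assms z
    by (simp add: carrier_subgroup_generated Int_absorb1 generate_consistent generate_is_subgroup
        subgroup_generated_def)
  finally show "\<exists>z\<in>carrier G. generate G S = generate G {z}"
    using z assms generate_incl by blast
next
  assume "\<exists>z\<in>carrier G. generate G S = generate G {z}"
  then obtain z where "z \<in> carrier G" "generate G S = generate G {z}"
    by blast
  then have "subgroup_generated G S = subgroup_generated G {z}"
    using assms by (simp add: subgroup_generated_def Int_absorb1)
  then show "cyclic_group (subgroup_generated G S)"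
    by (simp add: cyclic_group_generated)
qed

lemma (in group) generate_insert_one:
  assumes "S \<subseteq> carrier G"
  shows "generate G (insert \<one> S) = generate G S"
proof
  show "generate G (insert \<one> S) \<subseteq> generate G S"
    using assms by (intro generate_subgroup_incl generate_is_subgroup) (auto intro: generate.intros)
qed (rule mono_generate, blast)

lemma (in group) generate_int_pow_pair:
  assumes "r \<in> carrier G"
  shows "generate G {r [^] (i::int), r [^] j} = generate G {r [^] gcd i j}"
proof
  have "r [^] k \<in> generate G {r [^] gcd i j}" if "gcd i j dvd k" for k
  proof -
    have "r [^] k = (r [^] gcd i j) [^] (k div gcd i j)"
      using that assms by (simp add: int_pow_pow)
    then show ?thesis
      using assms by (auto simp: generate_pow)
  qed
  then show "generate G {r [^] i, r [^] j} \<subseteq> generate G {r [^] gcd i j}"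
    using assms by (intro generate_subgroup_incl generate_is_subgroup) auto
next
  obtain u v where uv: "u * i + v * j = gcd i j"
    using bezout_int by metis
  let ?T = "generate G {r [^] i, r [^] j}"
  have T: "subgroup ?T G"
    using assms by (intro generate_is_subgroup) auto
  have "r [^] i \<in> ?T" "r [^] j \<in> ?T"
    by (auto intro: generate.incl)
  then have "(r [^] i) [^] u \<in> ?T" "(r [^] j) [^] v \<in> ?T"
    using subgroup_int_pow_closed[OF T] by blast+
  then have "r [^] gcd i j \<in> ?T"
    using assms uv by (metis generate.eng int_pow_mult int_pow_pow mult.commute)
  then show "generate G {r [^] gcd i j} \<subseteq> ?T"
    using assms by (intro generate_subgroup_incl generate_is_subgroup) auto
qed

lemma dihedral_rotation_subgroup:
  assumes n: "0 < n"
  shows "subgroup {x \<in> carrier (dihedral_group n). \<not> snd x} (dihedral_group n)"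
    (is "subgroup ?R _")
proof -
  have rotation: "\<exists>k. x = dihedral_elem n k False" if "x \<in> ?R" for x
    using that by (auto elim: dihedral_rotation_cases)
  show ?thesis
  proof (rule group.subgroupI[OF group_dihedral_group[OF n]])
    show "?R \<subseteq> carrier (dihedral_group n)"
      by blast
    show "?R \<noteq> {}"
      using dihedral_elem_in_carrier[OF n, of 0 False] snd_dihedral_elem[of n 0 False] by blast
  next
    fix x y
    assume "x \<in> ?R" "y \<in> ?R"
    then obtain k l where "x = dihedral_elem n k False" "y = dihedral_elem n l False"
      using rotation by blast
    then show "inv\<^bsub>dihedral_group n\<^esub> x \<in> ?R" and "x \<otimes>\<^bsub>dihedral_group n\<^esub> y \<in> ?R"
      using n by (simp_all add: inv_dihedral_elem dihedral_elem_mult dihedral_elem_in_carrier)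
  qed
qed

lemma dihedral_reflection_subgroup:
  assumes n: "0 < n" and z: "z \<in> carrier (dihedral_group n)" "snd z"
  shows "subgroup {\<one>\<^bsub>dihedral_group n\<^esub>, z} (dihedral_group n)"
proof -
  interpret D: group "dihedral_group n"
    using group_dihedral_group[OF n] .
  obtain k where k: "z = dihedral_elem n k True"
    using z by (rule dihedral_reflection_cases)
  have "z \<otimes>\<^bsub>dihedral_group n\<^esub> z = \<one>\<^bsub>dihedral_group n\<^esub>"
    using n by (simp add: k dihedral_elem_mult one_dihedral_group)
  moreover have "inv\<^bsub>dihedral_group n\<^esub> z = z"
    using n by (simp add: k inv_dihedral_elem)
  ultimately show ?thesis
    using z(1) by (intro D.subgroupI) auto
qed

lemma generate_dihedral_reflection_pair_not_cyclic:
  assumes n: "0 < n"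
    and x: "x \<in> carrier (dihedral_group n)" "snd x"
    and y: "y \<in> carrier (dihedral_group n)" "y \<noteq> \<one>\<^bsub>dihedral_group n\<^esub>" "y \<noteq> x"
    and z: "z \<in> carrier (dihedral_group n)"
  shows "generate (dihedral_group n) {x, y} \<noteq> generate (dihedral_group n) {z}"
    (is "generate ?D _ \<noteq> _")
proof
  interpret D: group ?D
    using group_dihedral_group[OF n] .
  assume gen: "generate ?D {x, y} = generate ?D {z}"
  have xy: "x \<in> generate ?D {z}" "y \<in> generate ?D {z}"
    unfolding gen[symmetric] by (auto intro: generate.incl)
  show False
  proof (cases "snd z")
    case False
    then have "generate ?D {z} \<subseteq> {x \<in> carrier ?D. \<not> snd x}"
      using z by (intro D.generate_subgroup_incl dihedral_rotation_subgroup n) auto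
    then show False
      using xy x by auto
  next
    case True
    then have "generate ?D {z} \<subseteq> {\<one>\<^bsub>?D\<^esub>, z}"
      using z by (intro D.generate_subgroup_incl dihedral_reflection_subgroup n) auto
    moreover have "x \<noteq> \<one>\<^bsub>?D\<^esub>"
      using x by (auto simp: one_dihedral_group)
    ultimately show False
      using xy y by auto
  qed
qed

lemma generate_dihedral_rotation_pair_cyclic:
  assumes n: "0 < n"
    and x: "x \<in> carrier (dihedral_group n)" "\<not> snd x" and y: "y \<in> carrier (dihedral_group n)" "\<not> snd y"
  obtains z where "z \<in> carrier (dihedral_group n)"
    "generate (dihedral_group n) {x, y} = generate (dihedral_group n) {z}"
proof -
  interpret D: group "dihedral_group n"
    using group_dihedral_group[OF n] .
  let ?r = "dihedral_elem n 1 False"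
  have r: "?r \<in> carrier (dihedral_group n)"
    using n by (rule dihedral_elem_in_carrier)
  obtain k l where "x = dihedral_elem n k False" "y = dihedral_elem n l False"
    using x y by (meson dihedral_rotation_cases)
  then have "generate (dihedral_group n) {x, y} = generate (dihedral_group n) {?r [^]\<^bsub>dihedral_group n\<^esub> gcd k l}"
    using n D.generate_int_pow_pair[OF r, of k l] by (simp add: dihedral_rotation_int_pow)
  moreover have "?r [^]\<^bsub>dihedral_group n\<^esub> gcd k l \<in> carrier (dihedral_group n)"
    using r by (rule D.int_pow_closed)
  ultimately show thesis
    using that by blast
qed

lemma cyclic_dihedral_pair_iff:
  assumes n: "0 < n"
    and x: "x \<in> carrier (dihedral_group n)" and y: "y \<in> carrier (dihedral_group n)" and "x \<noteq> y"
  shows "cyclic_group (subgroup_generated (dihedral_group n) {x, y}) \<longleftrightarrow>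
           x = \<one>\<^bsub>dihedral_group n\<^esub> \<or> y = \<one>\<^bsub>dihedral_group n\<^esub> \<or> \<not> snd x \<and> \<not> snd y"
    (is "cyclic_group (subgroup_generated ?D _) \<longleftrightarrow> _")
proof -
  interpret D: group ?D
    using group_dihedral_group[OF n] .
  have "{x, y} \<subseteq> carrier ?D"
    using x y by simp
  then have cyclic_iff: "cyclic_group (subgroup_generated ?D {x, y}) \<longleftrightarrow>
      (\<exists>z\<in>carrier ?D. generate ?D {x, y} = generate ?D {z})"
    by (rule D.cyclic_subgroup_generated_iff)
  consider "x = \<one>\<^bsub>?D\<^esub>" | "y = \<one>\<^bsub>?D\<^esub>" | "\<not> snd x" "\<not> snd y"
    | "x \<noteq> \<one>\<^bsub>?D\<^esub>" "y \<noteq> \<one>\<^bsub>?D\<^esub>" "snd x"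
    | "x \<noteq> \<one>\<^bsub>?D\<^esub>" "y \<noteq> \<one>\<^bsub>?D\<^esub>" "snd y"
    by blast
  then show ?thesis
  proof cases
    case 1
    then have "generate ?D {x, y} = generate ?D {y}"
      using y D.generate_insert_one[of "{y}"] by simp
    then show ?thesis
      using 1 y cyclic_iff by blast
  next
    case 2
    then have "generate ?D {x, y} = generate ?D {x}"
      using x D.generate_insert_one[of "{x}"] by (simp add: insert_commute)
    then show ?thesis
      using 2 x cyclic_iff by blast
  next
    case 3
    then show ?thesis
      using generate_dihedral_rotation_pair_cyclic[OF n x _ y] cyclic_iff by metis
  next
    case 4
    then show ?thesis
      using generate_dihedral_reflection_pair_not_cyclic[OF n x(1) _ y] \<open>x \<noteq> y\<close> by (simp add: cyclic_iff)
  next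
    case 5
    then show ?thesis
      using generate_dihedral_reflection_pair_not_cyclic[OF n y(1) _ x] \<open>x \<noteq> y\<close>
      by (simp add: cyclic_iff insert_commute)
  qed
qed

lemma enhanced_power_graph_dihedral:
  assumes "0 < n"
  shows "enhanced_power_graph (dihedral_group n) =
    {(x, y). x \<in> carrier (dihedral_group n) \<and> y \<in> carrier (dihedral_group n) \<and> x \<noteq> y \<and>
             (x = \<one>\<^bsub>dihedral_group n\<^esub> \<or> y = \<one>\<^bsub>dihedral_group n\<^esub> \<or> \<not> snd x \<and> \<not> snd y)}"
  unfolding enhanced_power_graph_def using cyclic_dihedral_pair_iff[OF assms] by blast

section \<open>Commuting lifts\<close>

lemma stem_extension_lift:
  assumes "stem_extension H G q" "x \<in> carrier G"
  obtains x' where "x' \<in> carrier H" "q x' = x"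
proof -
  have "x \<in> q ` carrier H"
    using assms by (simp add: stem_extension_def epi_def)
  then show thesis
    using that by blast
qed

lemma stem_extension_dihedral_half_turn_lift_not_commute:
  assumes stem: "stem_extension H (dihedral_group n) q" and "even n" "0 < n"
    and nontrivial: "kernel H (dihedral_group n) q \<noteq> {\<one>\<^bsub>H\<^esub>}"
    and b: "b \<in> carrier H" "snd (q b)"
    and u: "u \<in> carrier H" "q u = dihedral_elem n (int n div 2) False"
  shows "b \<otimes>\<^bsub>H\<^esub> u \<noteq> u \<otimes>\<^bsub>H\<^esub> b"
proof
  assume commute: "b \<otimes>\<^bsub>H\<^esub> u = u \<otimes>\<^bsub>H\<^esub> b"
  obtain a where a: "a \<in> carrier H" "q a = dihedral_elem n 1 False"
    using stem dihedral_elem_in_carrier[OF \<open>0 < n\<close>] by (rule stem_extension_lift)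
  interpret dihedral_central_extension H n q a b
    using stem a b \<open>0 < n\<close>
    by (intro dihedral_central_extension.intro dihedral_central_extension_axioms.intro)
      (auto simp: stem_extension_def epi_def)
  have "kernel H (dihedral_group n) q \<subseteq> {\<one>\<^bsub>H\<^esub>}"
    using kernel_inter_derived_trivial_if_half_turn_commutes[OF \<open>even n\<close> u commute] stem
    by (auto simp: stem_extension_def)
  moreover have "\<one>\<^bsub>H\<^esub> \<in> kernel H (dihedral_group n) q"
    by (simp add: kernel_def)
  ultimately show False
    using nontrivial by blast
qed

lemma stem_extension_dihedral_reflection_lifts_not_commute:
  assumes stem: "stem_extension H (dihedral_group n) q" and "even n" "0 < n"
    and nontrivial: "kernel H (dihedral_group n) q \<noteq> {\<one>\<^bsub>H\<^esub>}"
    and x: "x \<in> carrier H" "snd (q x)"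
    and y: "y \<in> carrier H" "q y \<noteq> \<one>\<^bsub>dihedral_group n\<^esub>" "q y \<noteq> q x"
  shows "x \<otimes>\<^bsub>H\<^esub> y \<noteq> y \<otimes>\<^bsub>H\<^esub> x"
proof
  assume commute: "x \<otimes>\<^bsub>H\<^esub> y = y \<otimes>\<^bsub>H\<^esub> x"
  interpret q: group_hom H "dihedral_group n" q
    using stem group_dihedral_group[OF \<open>0 < n\<close>]
    by (simp add: group_hom_def group_hom_axioms_def stem_extension_def epi_def)
  have image_commute: "q x \<otimes>\<^bsub>dihedral_group n\<^esub> q y = q y \<otimes>\<^bsub>dihedral_group n\<^esub> q x"
    using commute x y by (simp flip: q.hom_mult)
  obtain k where k: "q x = dihedral_elem n k True"
    using x by (meson q.hom_closed dihedral_reflection_cases)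
  have not_commute: "b \<otimes>\<^bsub>H\<^esub> u \<noteq> u \<otimes>\<^bsub>H\<^esub> b"
    if "b \<in> carrier H" "snd (q b)" "u \<in> carrier H" "q u = dihedral_elem n (int n div 2) False" for b u
    using stem_extension_dihedral_half_turn_lift_not_commute[OF stem \<open>even n\<close> \<open>0 < n\<close> nontrivial that] .
  obtain l s where l: "q y = dihedral_elem n l s"
    using y by (meson q.hom_closed dihedral_group_cases)
  show False
  proof (cases s)
    case False
    have "int n dvd 2 * l" "\<not> int n dvd l"
      using image_commute y(2) \<open>0 < n\<close>
      by (simp_all add: k l False dihedral_reflection_rotation_commute_iff one_dihedral_group
          dihedral_elem_eq_iff mod_eq_0_iff_dvd)
    then have "q y = dihedral_elem n (int n div 2) False"
      using \<open>even n\<close> by (simp add: l False dihedral_half_turn_of_dvd)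
    then show False
      using not_commute[OF x y(1)] commute by blast
  next
    \<comment> \<open>the product of two commuting reflections is the half turn, and it commutes with x\<close>
    case True
    have "int n dvd 2 * (k - l)" "\<not> int n dvd (k - l)"
      using image_commute y(3) \<open>0 < n\<close>
      by (simp_all add: k l True dihedral_reflections_commute_iff dihedral_elem_eq_iff mod_eq_dvd_iff
          dvd_diff_commute [of _ l])
    then have "q (x \<otimes>\<^bsub>H\<^esub> y) = dihedral_elem n (int n div 2) False"
      using \<open>even n\<close> \<open>0 < n\<close> x y
      by (simp add: k l True dihedral_elem_mult dihedral_half_turn_of_dvd)
    moreover have "x \<otimes>\<^bsub>H\<^esub> (x \<otimes>\<^bsub>H\<^esub> y) = (x \<otimes>\<^bsub>H\<^esub> y) \<otimes>\<^bsub>H\<^esub> x"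
      using commute x y by (metis q.G.m_assoc)
    ultimately show False
      using not_commute[OF x] x y by simp
  qed
qed

lemma stem_extension_dihedral_commuting_lifts:
  assumes stem: "stem_extension H (dihedral_group n) q" and n: "0 < n"
    and x: "x \<in> carrier (dihedral_group n)" and y: "y \<in> carrier (dihedral_group n)"
    and trivial_or_rotations:
      "x = \<one>\<^bsub>dihedral_group n\<^esub> \<or> y = \<one>\<^bsub>dihedral_group n\<^esub> \<or> \<not> snd x \<and> \<not> snd y"
  shows "\<exists>x'\<in>carrier H. \<exists>y'\<in>carrier H. q x' = x \<and> q y' = y \<and> x' \<otimes>\<^bsub>H\<^esub> y' = y' \<otimes>\<^bsub>H\<^esub> x'"
proof -
  interpret q: group_hom H "dihedral_group n" q
    using stem group_dihedral_group[OF n]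
    by (simp add: group_hom_def group_hom_axioms_def stem_extension_def epi_def)
  obtain x' y' where x': "x' \<in> carrier H" "q x' = x" and y': "y' \<in> carrier H" "q y' = y"
    using stem x y by (meson stem_extension_lift)
  obtain a where a: "a \<in> carrier H" "q a = dihedral_elem n 1 False"
    using stem dihedral_elem_in_carrier[OF n] by (rule stem_extension_lift)
  have rotation_lift: "q (a [^]\<^bsub>H\<^esub> k) = dihedral_elem n k False" for k :: int
    using a n by (simp add: q.hom_int_pow dihedral_rotation_int_pow)
  consider "x = \<one>\<^bsub>dihedral_group n\<^esub>" | "y = \<one>\<^bsub>dihedral_group n\<^esub>" | "\<not> snd x" "\<not> snd y"
    using trivial_or_rotations by blast
  then show ?thesis
  proof cases
    case 1
    then show ?thesis
      using y' by (intro bexI[of _ "\<one>\<^bsub>H\<^esub>"] bexI[of _ y']) auto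
  next
    case 2
    then show ?thesis
      using x' by (intro bexI[of _ x'] bexI[of _ "\<one>\<^bsub>H\<^esub>"]) auto
  next
    case 3
    then obtain k l where "x = dihedral_elem n k False" "y = dihedral_elem n l False"
      using x y by (meson dihedral_rotation_cases)
    then show ?thesis
      using a rotation_lift
      by (intro bexI[of _ "a [^]\<^bsub>H\<^esub> k"] bexI[of _ "a [^]\<^bsub>H\<^esub> l"])
        (simp_all add: q.G.int_pow_mult [symmetric] add.commute)
  qed
qed

lemma deep_commuting_graph_dihedral:
  assumes stem: "stem_extension H (dihedral_group n) q" and "even n" and n: "0 < n"
    and nontrivial: "kernel H (dihedral_group n) q \<noteq> {\<one>\<^bsub>H\<^esub>}"
  shows "deep_commuting_graph H (dihedral_group n) q =
    {(x, y). x \<in> carrier (dihedral_group n) \<and> y \<in> carrier (dihedral_group n) \<and> x \<noteq> y \<and>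
             (x = \<one>\<^bsub>dihedral_group n\<^esub> \<or> y = \<one>\<^bsub>dihedral_group n\<^esub> \<or> \<not> snd x \<and> \<not> snd y)}"
proof -
  have "(\<exists>x'\<in>carrier H. \<exists>y'\<in>carrier H. q x' = x \<and> q y' = y \<and> x' \<otimes>\<^bsub>H\<^esub> y' = y' \<otimes>\<^bsub>H\<^esub> x') \<longleftrightarrow>
       x = \<one>\<^bsub>dihedral_group n\<^esub> \<or> y = \<one>\<^bsub>dihedral_group n\<^esub> \<or> \<not> snd x \<and> \<not> snd y"
    if x: "x \<in> carrier (dihedral_group n)" and y: "y \<in> carrier (dihedral_group n)" and "x \<noteq> y"
    for x y
  proof
    assume "\<exists>x'\<in>carrier H. \<exists>y'\<in>carrier H. q x' = x \<and> q y' = y \<and> x' \<otimes>\<^bsub>H\<^esub> y' = y' \<otimes>\<^bsub>H\<^esub> x'"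
    then obtain x' y' where "x' \<in> carrier H" "y' \<in> carrier H" "q x' = x" "q y' = y"
      and "x' \<otimes>\<^bsub>H\<^esub> y' = y' \<otimes>\<^bsub>H\<^esub> x'"
      by blast
    then show "x = \<one>\<^bsub>dihedral_group n\<^esub> \<or> y = \<one>\<^bsub>dihedral_group n\<^esub> \<or> \<not> snd x \<and> \<not> snd y"
      using stem_extension_dihedral_reflection_lifts_not_commute[OF stem \<open>even n\<close> n nontrivial]
        \<open>x \<noteq> y\<close> by metis
  qed (rule stem_extension_dihedral_commuting_lifts[OF stem n x y])
  then show ?thesis
    unfolding deep_commuting_graph_def by blast
qed

theorem theorem5p3:
  fixes n :: nat and H :: "('c, 'd) monoid_scheme" and q :: "'c \<Rightarrow> nat \<times> bool"
  assumes "even n" and "n \<ge> 4"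
    and "schur_cover H (dihedral_group n) q"
  shows "deep_commuting_graph H (dihedral_group n) q = enhanced_power_graph (dihedral_group n)"
proof -
  have n: "0 < n"
    using assms(2) by simp
  have stem: "stem_extension H (dihedral_group n) q"
    using assms(3) by (simp add: schur_cover_def)
  have "card {(0, False), (n, False)} \<le> card (kernel H (dihedral_group n) q)"
    using schur_cover_kernel_card_max[OF assms(3) stem_extension_dihedral_reduce[OF assms(1) n]]
    by (simp add: dihedral_reduce_kernel n finite_carrier_dihedral_group)
  then have "kernel H (dihedral_group n) q \<noteq> {\<one>\<^bsub>H\<^esub>}"
    using n by auto
  then show ?thesis
    by (simp add: deep_commuting_graph_dihedral[OF stem assms(1) n] enhanced_power_graph_dihedral[OF n])
qed

end
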